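(* For every extreme point $x$ of $\mathbf{S}$ there exists a non-uniformly stable matching $\mu$ in $G$ with $\chi_\mu=x$.
   Context: Setting: $G=(V,E)$ is a finite simple bipartite graph with $V=V_1\sqcup V_2$, every edge joining a vertex of $V_1$ to a vertex of $V_2$; an edge is identified with the set of its two endpoints. $E$ is partitioned into $E_1,E_2$. For $F\subseteq E$ and $v\in V$, $F(v)$ is the set of edges of $F$ incident to $v$. For every $v\in V$ there is a transitive and complete binary relation $\succsim_v$ on $E(v)\cup\{\emptyset\}$ with $e\succsim_v\emptyset$ and $\emptyset\not\succsim_v e$ for all $e\in E(v)$; $\succ_v$ and $\sim_v$ are its strict and indifference parts. A matching is $\mu\subseteq E$ with $|\mu(v)|\le1$ for all $v$; $\mu(v)$ denotes the edge of $\mu$ at $v$, or $\emptyset$. An edge $e\in E\setminus\mu$ weakly blocks $\mu$ if $e\succsim_v\mu(v)$ for every $v\in e$; it strongly blocks $\mu$ if additionally $e\succ_w\mu(w)$ for some $w\in e$. $\mu$ is non-uniformly stable if no edge of $E_1\setminus\mu$ weakly blocks $\mu$ and no edge of $E_2\setminus\mu$ strongly blocks $\mu$. For $x\in\mathbb{R}^E$, $x(F)=\sum_{e\in F}x(e)$; $\chi_F$ is the characteristic vector of $F$. $E[\succ_v e]=\{f\in E(v): f\succ_v e\}$, $E[\sim_v e]=\{f\in E(v): f\sim_v e\}$. $\mathbf{S}$ is the set of $x\in\mathbb{R}_+^E$ with (1) $x(E(v))\le1$ for all $v\in V$; (2) $x(e)+\sum_{v\in e}x(E[\succ_v e])\ge1$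 for all $e\in E_1$; (3) $x(E[\sim_v e])+\sum_{w\in e}x(E[\succ_w e])\ge1$ for all $e\in E_2$, $v\in e$. *)

theory Defs
  imports "HOL-Analysis.Analysis"
begin

text \<open>Vertices have type 'v; an edge is the set of its two endpoints (type 'v set).
  The empty set {} plays the role of the symbol for "unmatched".
  Preferences: R v a b means a is weakly preferred to b by v.\<close>

definition bip_graph :: "'v set \<Rightarrow> 'v set \<Rightarrow> 'v set set \<Rightarrow> bool" where
  "bip_graph V1 V2 E \<longleftrightarrow> finite V1 \<and> finite V2 \<and> V1 \<inter> V2 = {} \<and>
     E \<subseteq> {{a, b} | a b. a \<in> V1 \<and> b \<in> V2}"

definition inc :: "'v set set \<Rightarrow> 'v \<Rightarrow> 'v set set" where
  "inc F v = {e \<in> F. v \<in> e}"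

definition strict :: "('v \<Rightarrow> 'v set \<Rightarrow> 'v set \<Rightarrow> bool) \<Rightarrow> 'v \<Rightarrow> 'v set \<Rightarrow> 'v set \<Rightarrow> bool" where
  "strict R v a b \<longleftrightarrow> R v a b \<and> \<not> R v b a"

definition pref_ok :: "'v set \<Rightarrow> 'v set set \<Rightarrow> ('v \<Rightarrow> 'v set \<Rightarrow> 'v set \<Rightarrow> bool) \<Rightarrow> bool" where
  "pref_ok V E R \<longleftrightarrow> (\<forall>v\<in>V. let D = inc E v \<union> {{}} in
      (\<forall>a\<in>D. \<forall>b\<in>D. R v a b \<or> R v b a) \<and>
      (\<forall>a\<in>D. \<forall>b\<in>D. \<forall>c\<in>D. R v a b \<longrightarrow> R v b c \<longrightarrow> R v a c) \<and>
      (\<forall>e\<in>inc E v. R v e {} \<and> \<not> R v {} e))"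

definition matching :: "'v set set \<Rightarrow> 'v set set \<Rightarrow> bool" where
  "matching E \<mu> \<longleftrightarrow> \<mu> \<subseteq> E \<and> (\<forall>v. card (inc \<mu> v) \<le> 1)"

definition mu_at :: "'v set set \<Rightarrow> 'v \<Rightarrow> 'v set" where
  "mu_at \<mu> v = (if \<exists>e\<in>\<mu>. v \<in> e then (THE e. e \<in> \<mu> \<and> v \<in> e) else {})"

definition weakly_blocks :: "('v \<Rightarrow> 'v set \<Rightarrow> 'v set \<Rightarrow> bool) \<Rightarrow> 'v set set \<Rightarrow> 'v set \<Rightarrow> bool" where
  "weakly_blocks R \<mu> e \<longleftrightarrow> e \<notin> \<mu> \<and> (\<forall>v\<in>e. R v e (mu_at \<mu> v))"

definition strongly_blocks :: "('v \<Rightarrow> 'v set \<Rightarrow> 'v set \<Rightarrow> bool) \<Rightarrow> 'v set set \<Rightarrow> 'v set \<Rightarrow> bool" where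
  "strongly_blocks R \<mu> e \<longleftrightarrow> weakly_blocks R \<mu> e \<and> (\<exists>w\<in>e. strict R w e (mu_at \<mu> w))"

definition nonuniformly_stable ::
  "'v set set \<Rightarrow> 'v set set \<Rightarrow> ('v \<Rightarrow> 'v set \<Rightarrow> 'v set \<Rightarrow> bool) \<Rightarrow> 'v set set \<Rightarrow> bool" where
  "nonuniformly_stable E1 E2 R \<mu> \<longleftrightarrow> matching (E1 \<union> E2) \<mu> \<and>
     (\<forall>e\<in>E1 - \<mu>. \<not> weakly_blocks R \<mu> e) \<and>
     (\<forall>e\<in>E2 - \<mu>. \<not> strongly_blocks R \<mu> e)"

definition better :: "'v set set \<Rightarrow> ('v \<Rightarrow> 'v set \<Rightarrow> 'v set \<Rightarrow> bool) \<Rightarrow> 'v \<Rightarrow> 'v set \<Rightarrow> 'v set set" where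
  "better E R v e = {f \<in> inc E v. strict R v f e}"

definition indiff :: "'v set set \<Rightarrow> ('v \<Rightarrow> 'v set \<Rightarrow> 'v set \<Rightarrow> bool) \<Rightarrow> 'v \<Rightarrow> 'v set \<Rightarrow> 'v set set" where
  "indiff E R v e = {f \<in> inc E v. R v f e \<and> R v e f}"

text \<open>The polytope S, as a subset of R^E; vectors in R^E are represented as functions
  'v set \<Rightarrow> real vanishing outside E.\<close>
definition S_poly :: "'v set \<Rightarrow> 'v set set \<Rightarrow> 'v set set \<Rightarrow> ('v \<Rightarrow> 'v set \<Rightarrow> 'v set \<Rightarrow> bool)
     \<Rightarrow> ('v set \<Rightarrow> real) set" where
  "S_poly V E1 E2 R = {x.
     (\<forall>e. e \<notin> E1 \<union> E2 \<longrightarrow> x e = 0) \<and>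
     (\<forall>e\<in>E1 \<union> E2. 0 \<le> x e) \<and>
     (\<forall>v\<in>V. sum x (inc (E1 \<union> E2) v) \<le> 1) \<and>
     (\<forall>e\<in>E1. x e + (\<Sum>v\<in>e. sum x (better (E1 \<union> E2) R v e)) \<ge> 1) \<and>
     (\<forall>e\<in>E2. \<forall>v\<in>e. sum x (indiff (E1 \<union> E2) R v e)
                      + (\<Sum>w\<in>e. sum x (better (E1 \<union> E2) R w e)) \<ge> 1)}"

definition extreme_pt :: "('a \<Rightarrow> real) \<Rightarrow> ('a \<Rightarrow> real) set \<Rightarrow> bool" where
  "extreme_pt x P \<longleftrightarrow> x \<in> P \<and>
     (\<forall>y\<in>P. \<forall>z\<in>P. \<forall>t::real. 0 < t \<and> t < 1 \<and> x = (\<lambda>e. t * y e + (1 - t) * z e) \<longrightarrow> y = z)"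

end

theory Submission
  imports Defs
begin

text \<open>Summing the constraints of S against x itself shows that every vertex carrying
  weight is saturated and every positive edge satisfies its stability constraint with
  equality.  At its \<open>V1\<close>-end a positive edge e then occupies the interval from
  \<open>x(E[\<succ> e])\<close> to \<open>x(E[\<succ> e]) + x(E[\<sim> e])\<close> inside \<open>[0, 1]\<close>, and tightness makes its
  \<open>V2\<close>-end see the mirror image of that interval.  Cutting all intervals at a level
  \<open>\<theta>\<close> writes x as a convex combination of two points of S, so at an extreme point no
  interval can be cut: all positive edges at a vertex are tied and top-ranked.  In this
  degenerate situation the fractional edges have minimum degree two, hence contain an
  even cycle, and alternating \<open>\<plusminus>\<epsilon>\<close> along it stays inside S.  So extreme points are
  integral, and the support of an integral point of S is a non-uniformly stable matching.\<close>

lemma extreme_ptD: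
  assumes "extreme_pt x P" and "y \<in> P" and "z \<in> P" and "0 < t" and "t < 1"
    and "x = (\<lambda>e. t * y e + (1 - t) * z e)"
  shows "y = z"
proof -
  have h: "\<forall>y\<in>P. \<forall>z\<in>P. \<forall>t::real. 0 < t \<and> t < 1 \<and> x = (\<lambda>e. t * y e + (1 - t) * z e) \<longrightarrow> y = z"
    using assms(1) unfolding extreme_pt_def by (rule conjunct2)
  have "0 < t \<and> t < 1 \<and> x = (\<lambda>e. t * y e + (1 - t) * z e) \<longrightarrow> y = z"
    using spec[where x = t, OF bspec[OF bspec[OF h assms(2)] assms(3)]] .
  then show ?thesis by (rule mp) (intro conjI assms(4-6))
qed

lemma extreme_pt_symmetric_perturbation:
  assumes "extreme_pt x P" and "(\<lambda>e. x e + d e) \<in> P" and "(\<lambda>e. x e - d e) \<in> P"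
  shows "d = (\<lambda>_. 0)"
proof -
  have x_eq: "x = (\<lambda>e. 1/2 * (x e + d e) + (1 - 1/2) * (x e - d e))"
    by (rule ext) (simp add: field_simps)
  have "(\<lambda>e. x e + d e) = (\<lambda>e. x e - d e)"
    by (rule extreme_ptD[OF assms _ _ x_eq]) simp_all
  then show ?thesis by (simp add: fun_eq_iff)
qed

lemma mu_at_eqI:
  assumes "card (inc \<mu> v) \<le> 1" and "finite (inc \<mu> v)" and f: "f \<in> \<mu>" "v \<in> f"
  shows "mu_at \<mu> v = f"
proof -
  have all: "\<forall>a\<in>inc \<mu> v. \<forall>b\<in>inc \<mu> v. a = b"
    using card_le_Suc0_iff_eq[OF assms(2)] assms(1) by simp
  have uniq: "g = f" if "g \<in> \<mu>" "v \<in> g" for g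
  proof -
    have "g \<in> inc \<mu> v" "f \<in> inc \<mu> v" using that f by (simp_all add: inc_def)
    then show ?thesis using all by blast
  qed
  have "(THE e. e \<in> \<mu> \<and> v \<in> e) = f"
    by (rule the_equality) (use f uniq in blast)+
  moreover have "\<exists>e\<in>\<mu>. v \<in> e" using f by blast
  ultimately show ?thesis unfolding mu_at_def by simp
qed

section \<open>Circulations on even cycles of a bipartite graph\<close>

definition alternating :: "(nat \<Rightarrow> 'v) \<Rightarrow> nat \<Rightarrow> 'v set \<Rightarrow> real" where
  "alternating c n e = (\<Sum>k<n. (-1)^k * (if e = {c k, c (Suc k)} then 1 else 0))"

locale bipartite =
  fixes V1 V2 :: "'v set" and E :: "'v set set"
  assumes bip: "bip_graph V1 V2 E"
begin

lemma finite_vertices: "finite (V1 \<union> V2)"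
  using bip by (auto simp: bip_graph_def)

lemma disjoint_sides: "V1 \<inter> V2 = {}"
  using bip by (auto simp: bip_graph_def)

lemma finite_edges: "finite E"
proof (rule finite_subset)
  show "E \<subseteq> (\<lambda>(a, b). {a, b}) ` (V1 \<times> V2)"
    using bip by (auto simp: bip_graph_def)
  show "finite ((\<lambda>(a, b). {a, b}) ` (V1 \<times> V2))"
    using bip by (auto simp: bip_graph_def)
qed

lemma edgeE:
  assumes "e \<in> E"
  obtains a b where "e = {a, b}" "a \<in> V1" "b \<in> V2" "a \<noteq> b"
proof -
  from assms bip obtain a b where "e = {a, b}" "a \<in> V1" "b \<in> V2"
    by (auto simp: bip_graph_def)
  moreover from this have "a \<noteq> b" using disjoint_sides by auto
  ultimately show thesis using that by blast
qed

lemma edge_ends_distinct: "{a, b} \<in> E \<Longrightarrow> a \<noteq> b"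
  by (erule edgeE) (auto simp: doubleton_eq_iff)

lemma edge_vertex: "e \<in> E \<Longrightarrow> v \<in> e \<Longrightarrow> v \<in> V1 \<union> V2"
  by (erule edgeE) auto

lemma finite_inc: "finite (inc E v)"
  using finite_edges by (auto simp: inc_def)

lemma inc_outside: "v \<notin> V1 \<union> V2 \<Longrightarrow> inc E v = {}"
  using edge_vertex by (auto simp: inc_def)

lemma sum_edges_vertices:
  "(\<Sum>e\<in>E. \<Sum>v\<in>e. g v e) = (\<Sum>v\<in>V1 \<union> V2. \<Sum>e\<in>inc E v. g v e)"
proof -
  have "(\<Sum>v\<in>V1 \<union> V2. \<Sum>e\<in>{e. e \<in> E \<and> v \<in> e}. g v e)
      = (\<Sum>e\<in>E. \<Sum>v\<in>{v. v \<in> V1 \<union> V2 \<and> v \<in> e}. g v e)"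
    by (rule sum.swap_restrict[OF finite_vertices finite_edges])
  moreover have "{v. v \<in> V1 \<union> V2 \<and> v \<in> e} = e" if "e \<in> E" for e
    using edge_vertex[OF that] by auto
  ultimately show ?thesis by (simp add: inc_def)
qed

lemma walk_parity:
  assumes "\<And>k. {c k, c (Suc k)} \<in> E"
  shows "c k \<in> V1 \<longleftrightarrow> (c 0 \<in> V1 \<longleftrightarrow> even k)"
proof (induction k)
  case (Suc k)
  obtain a b where "{c k, c (Suc k)} = {a, b}" "a \<in> V1" "b \<in> V2" "a \<noteq> b"
    using assms by (rule edgeE)
  then have "c (Suc k) \<in> V1 \<longleftrightarrow> c k \<notin> V1"
    using disjoint_sides by (auto simp: doubleton_eq_iff)
  with Suc.IH show ?case by simp
qed simp

lemma alternating_inc_sum: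
  assumes closed: "c n = c 0" and "even n" and steps: "\<And>k. {c k, c (Suc k)} \<in> E"
  shows "sum (alternating c n) (inc E v) = 0"
proof -
  define g where "g k = (-1)^k * (if v = c k then 1 else 0::real)" for k
  have "sum (alternating c n) (inc E v)
      = (\<Sum>k<n. \<Sum>e\<in>inc E v. (-1)^k * (if e = {c k, c (Suc k)} then 1 else 0::real))"
    unfolding alternating_def by (rule sum.swap)
  also have "\<dots> = (\<Sum>k<n. g k - g (Suc k))"
  proof (rule sum.cong[OF refl])
    fix k
    have "(\<Sum>e\<in>inc E v. (-1)^k * (if e = {c k, c (Suc k)} then 1 else 0::real))
        = (-1)^k * (if {c k, c (Suc k)} \<in> inc E v then 1 else 0)"
      by (simp add: sum_distrib_left[symmetric] finite_inc)
    also have "\<dots> = g k - g (Suc k)"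
    proof -
      have "c k \<noteq> c (Suc k)" using steps[of k] by (rule edge_ends_distinct)
      moreover have "{c k, c (Suc k)} \<in> inc E v \<longleftrightarrow> v = c k \<or> v = c (Suc k)"
        using steps[of k] by (auto simp: inc_def)
      ultimately show ?thesis by (auto simp: g_def)
    qed
    finally show "(\<Sum>e\<in>inc E v. (-1)^k * (if e = {c k, c (Suc k)} then 1 else 0::real))
        = g k - g (Suc k)" .
  qed
  also have "\<dots> = g 0 - g n" by (rule sum_lessThan_telescope')
  also have "\<dots> = 0" using closed \<open>even n\<close> by (simp add: g_def)
  finally show ?thesis .
qed

lemma alternating_first_edge:
  assumes "3 \<le> n" and "inj_on c {..<n}"
  shows "alternating c n {c 0, c 1} = 1"
proof -
  have ne: "{c 0, c 1} \<noteq> {c k, c (Suc k)}" if "0 < k" "k < n" for k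
  proof
    assume h: "{c 0, c 1} = {c k, c (Suc k)}"
    have "c k \<noteq> c 0" using inj_onD[OF assms(2), of k 0] that by auto
    with h have "c k = c 1" by auto
    then have "k = 1" using inj_onD[OF assms(2), of k 1] that assms(1) by auto
    with h have "c 2 = c 0 \<or> c 2 = c 1" by (auto simp: numeral_2_eq_2 doubleton_eq_iff)
    then show False
      using inj_onD[OF assms(2), of 2 0] inj_onD[OF assms(2), of 2 1] assms(1) by auto
  qed
  then have "alternating c n {c 0, c 1} = (\<Sum>k<n. (-1)^k * (if k = 0 then 1 else 0::real))"
    unfolding alternating_def by (intro sum.cong refl) (simp add: ne)
  also have "\<dots> = 1" using assms(1) by (simp add: sum.delta' if_distrib cong: if_cong)
  finally show ?thesis .
qed

lemma nonbacktracking_walk: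
  assumes "F \<subseteq> E" and "e0 \<in> F" and deg: "\<forall>e\<in>F. \<forall>v\<in>e. \<exists>f\<in>F. f \<noteq> e \<and> v \<in> f"
  obtains s :: "nat \<Rightarrow> 'v" where "\<And>i. {s i, s (Suc i)} \<in> F" "\<And>i. s (Suc (Suc i)) \<noteq> s i"
proof -
  have step: "\<exists>q. {c, q} \<in> F \<and> q \<noteq> p" if pc: "{p, c} \<in> F" for p c
  proof -
    obtain f where f: "f \<in> F" "f \<noteq> {p, c}" "c \<in> f" using deg pc by blast
    then obtain a b where "f = {a, b}" using assms(1) edgeE by blast
    with f obtain q where "f = {c, q}" by auto
    with f show ?thesis by auto
  qed
  obtain a b where "e0 = {a, b}" using assms(1,2) edgeE by blast
  then have start: "\<exists>y. {fst y, snd y} \<in> F" using assms(2) by (intro exI[of _ "(a, b)"]) simp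
  have extend: "\<exists>y'. {fst y', snd y'} \<in> F \<and> fst y' = snd y \<and> snd y' \<noteq> fst y"
    if y: "{fst y, snd y} \<in> F" for y :: "'v \<times> 'v"
  proof -
    obtain q where "{snd y, q} \<in> F" "q \<noteq> fst y" using step[OF y] by blast
    then show ?thesis by (intro exI[of _ "(snd y, q)"]) simp
  qed
  obtain w where w: "\<forall>i. {fst (w i), snd (w i)} \<in> F \<and>
      fst (w (Suc i)) = snd (w i) \<and> snd (w (Suc i)) \<noteq> fst (w i)"
    using dependent_nat_choice[of "\<lambda>_ y. {fst y, snd y} \<in> F"
        "\<lambda>_ y y'. fst y' = snd y \<and> snd y' \<noteq> fst y", OF start extend] by blast
  show thesis by (rule that[of "fst \<circ> w"]) (use w in auto)
qed

lemma cycle_in_min_degree_two: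
  assumes "F \<subseteq> E" and "F \<noteq> {}" and "\<forall>e\<in>F. \<forall>v\<in>e. \<exists>f\<in>F. f \<noteq> e \<and> v \<in> f"
  obtains c n where "3 \<le> n" "even n" "c n = c 0" "inj_on c {..<n}" "\<And>k. {c k, c (Suc k)} \<in> F"
proof -
  obtain s where sF: "\<And>i. {s i, s (Suc i)} \<in> F" and nb: "\<And>i. s (Suc (Suc i)) \<noteq> s i"
    using nonbacktracking_walk assms by blast
  have "range s \<subseteq> V1 \<union> V2" using sF assms(1) edge_vertex by blast
  then have "\<not> inj s" using range_inj_infinite finite_subset[OF _ finite_vertices] by blast
  then obtain i j where "i \<noteq> j" "s i = s j" unfolding inj_def by blast
  then have "\<exists>j. \<exists>i<j. s i = s j" by (metis linorder_neqE_nat)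
  define j0 where "j0 = (LEAST j. \<exists>i<j. s i = s j)"
  obtain i0 where i0: "i0 < j0" "s i0 = s j0"
    using LeastI_ex[OF \<open>\<exists>j. \<exists>i<j. s i = s j\<close>] unfolding j0_def by blast
  have minimal: "s i \<noteq> s j" if "i < j" "j < j0" for i j
    using not_less_Least[of j "\<lambda>j. \<exists>i<j. s i = s j"] that unfolding j0_def by blast
  define n where "n = j0 - i0"
  define c where "c k = s (i0 + k)" for k
  have cF: "{c k, c (Suc k)} \<in> F" for k using sF by (simp add: c_def)
  have closed: "c n = c 0" using i0 by (simp add: c_def n_def)
  have "c p \<noteq> c q" if "p < q" "q < n" for p q
    using minimal[of "i0 + p" "i0 + q"] that by (simp add: c_def n_def)
  then have inj: "inj_on c {..<n}"
    by (metis inj_onI linorder_neqE_nat lessThan_iff)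
  have "c 0 \<noteq> c 1" using cF[of 0] assms(1) edge_ends_distinct by auto
  then have "n \<noteq> 1" using closed by auto
  moreover have "n \<noteq> 2"
    using nb[of i0] closed by (auto simp: c_def numeral_2_eq_2)
  ultimately have "3 \<le> n" using i0 by (simp add: n_def)
  moreover have "even n"
    using walk_parity[of c n] cF assms(1) closed by auto
  ultimately show thesis using that closed inj cF by blast
qed

lemma min_degree_two_circulation:
  assumes "F \<subseteq> E" and "F \<noteq> {}" and "\<forall>e\<in>F. \<forall>v\<in>e. \<exists>f\<in>F. f \<noteq> e \<and> v \<in> f"
  obtains d :: "'v set \<Rightarrow> real"
  where "\<And>e. e \<notin> F \<Longrightarrow> d e = 0" "\<And>v. sum d (inc E v) = 0" "d \<noteq> (\<lambda>_. 0)"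
proof -
  obtain c n where c: "3 \<le> n" "even n" "c n = c 0" "inj_on c {..<n}"
    and cF: "\<And>k. {c k, c (Suc k)} \<in> F"
    using cycle_in_min_degree_two[OF assms] by blast
  show thesis
  proof (rule that[of "alternating c n"])
    show "alternating c n e = 0" if "e \<notin> F" for e
      using cF that unfolding alternating_def by (auto intro!: sum.neutral)
    show "sum (alternating c n) (inc E v) = 0" for v
      using alternating_inc_sum[of c n] c cF assms(1) by blast
    show "alternating c n \<noteq> (\<lambda>_. 0)"
    proof
      assume "alternating c n = (\<lambda>_. 0)"
      then have "alternating c n {c 0, c 1} = 0" by simp
      then show False using alternating_first_edge[OF c(1,4)] by simp
    qed
  qed
qed

end

locale S_point = bipartite V1 V2 E
  for V1 V2 :: "'v set" and E :: "'v set set" +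
  fixes E1 E2 :: "'v set set" and R :: "'v \<Rightarrow> 'v set \<Rightarrow> 'v set \<Rightarrow> bool"
    and x :: "'v set \<Rightarrow> real"
  assumes E_split: "E = E1 \<union> E2"
    and pref: "pref_ok (V1 \<union> V2) E R"
    and x_in_S: "x \<in> S_poly (V1 \<union> V2) E1 E2 R"
begin

definition above :: "'v \<Rightarrow> 'v set \<Rightarrow> real" where
  "above v e = sum x (better E R v e)"

definition tie :: "'v \<Rightarrow> 'v set \<Rightarrow> real" where
  "tie v e = sum x (indiff E R v e)"

definition load :: "'v \<Rightarrow> real" where
  "load v = sum x (inc E v)"

lemma x_outside: "e \<notin> E \<Longrightarrow> x e = 0"
  using x_in_S E_split by (auto simp: S_poly_def)

lemma x_nonneg: "0 \<le> x e"
  using x_in_S E_split x_outside by (cases "e \<in> E") (auto simp: S_poly_def)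

lemma load_le_1: "load v \<le> 1"
proof (cases "v \<in> V1 \<union> V2")
  case True
  then show ?thesis using x_in_S unfolding S_poly_def load_def E_split[symmetric] by blast
qed (simp add: load_def inc_outside)

lemma load_nonneg: "0 \<le> load v"
  unfolding load_def by (rule sum_nonneg) (simp add: x_nonneg)

lemma x_le_load: "e \<in> inc E v \<Longrightarrow> x e \<le> load v"
  unfolding load_def by (rule member_le_sum) (simp_all add: x_nonneg finite_inc)

lemma E1_constraint: "e \<in> E1 \<Longrightarrow> 1 \<le> x e + (\<Sum>v\<in>e. above v e)"
  using x_in_S unfolding S_poly_def above_def E_split[symmetric] by blast

lemma E2_constraint: "e \<in> E2 \<Longrightarrow> v \<in> e \<Longrightarrow> 1 \<le> tie v e + (\<Sum>w\<in>e. above w e)"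
  using x_in_S unfolding S_poly_def above_def tie_def E_split[symmetric] by blast

lemma pref_total: "f \<in> inc E v \<Longrightarrow> g \<in> inc E v \<Longrightarrow> R v f g \<or> R v g f"
  using pref edge_vertex unfolding pref_ok_def Let_def inc_def by blast

lemma pref_trans:
  "f \<in> inc E v \<Longrightarrow> g \<in> inc E v \<Longrightarrow> h \<in> inc E v \<Longrightarrow> R v f g \<Longrightarrow> R v g h \<Longrightarrow> R v f h"
  using pref edge_vertex unfolding pref_ok_def Let_def inc_def by blast

lemma pref_refl: "f \<in> inc E v \<Longrightarrow> R v f f"
  using pref_total by blast

lemma better_subset: "better E R v e \<subseteq> inc E v"
  by (auto simp: better_def)

lemma indiff_subset: "indiff E R v e \<subseteq> inc E v"
  by (auto simp: indiff_def)

lemma finite_better: "finite (better E R v e)"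
  using finite_subset[OF better_subset finite_inc] .

lemma finite_indiff: "finite (indiff E R v e)"
  using finite_subset[OF indiff_subset finite_inc] .

lemma weakly_better_split:
  "{f \<in> inc E v. R v f e} = better E R v e \<union> indiff E R v e"
  "better E R v e \<inter> indiff E R v e = {}"
  by (auto simp: better_def indiff_def strict_def)

lemma x_le_tie:
  assumes "e \<in> E" and "v \<in> e"
  shows "x e \<le> tie v e"
proof -
  have "e \<in> indiff E R v e" using pref_refl[of e v] assms by (auto simp: indiff_def inc_def)
  then show ?thesis unfolding tie_def by (intro member_le_sum) (simp_all add: x_nonneg finite_indiff)
qed

lemma above_nonneg: "0 \<le> above v e"
  unfolding above_def by (rule sum_nonneg) (simp add: x_nonneg)

lemma tie_nonneg: "0 \<le> tie v e"
  unfolding tie_def by (rule sum_nonneg) (simp add: x_nonneg)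

lemma above_tie_le_load: "above v e + tie v e \<le> load v"
proof -
  have "above v e + tie v e = sum x {f \<in> inc E v. R v f e}"
    unfolding above_def tie_def weakly_better_split
    by (rule sum.union_disjoint[symmetric]) (simp_all add: finite_better finite_indiff weakly_better_split)
  also have "\<dots> \<le> load v" unfolding load_def
    by (rule sum_mono2[OF finite_inc]) (auto simp: x_nonneg)
  finally show ?thesis .
qed

section \<open>Complementary slackness\<close>

lemma load_square: "(\<Sum>e\<in>inc E v. x e * (2 * above v e + tie v e)) = (load v)\<^sup>2"
proof -
  let ?I = "inc E v"
  let ?p = "\<lambda>P e f. if P e f then x e * x f else 0"
  have above': "x e * above v e = (\<Sum>f\<in>?I. ?p (\<lambda>e f. strict R v f e) e f)" for e
    unfolding above_def better_def
    by (simp add: sum_distrib_left sum.inter_filter[OF finite_inc, symmetric] if_distrib cong: if_cong)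
  have tie': "x e * tie v e = (\<Sum>f\<in>?I. ?p (\<lambda>e f. R v f e \<and> R v e f) e f)" for e
    unfolding tie_def indiff_def
    by (simp add: sum_distrib_left sum.inter_filter[OF finite_inc, symmetric] if_distrib cong: if_cong)
  have swap: "(\<Sum>e\<in>?I. \<Sum>f\<in>?I. ?p (\<lambda>e f. strict R v f e) e f)
      = (\<Sum>e\<in>?I. \<Sum>f\<in>?I. ?p (\<lambda>e f. strict R v e f) e f)"
    by (subst sum.swap) (intro sum.cong refl, simp add: mult.commute)
  have "(\<Sum>e\<in>?I. x e * (2 * above v e + tie v e))
      = (\<Sum>e\<in>?I. x e * above v e) + (\<Sum>e\<in>?I. x e * above v e) + (\<Sum>e\<in>?I. x e * tie v e)"
    by (simp add: algebra_simps sum.distrib sum_distrib_left)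
  also have "\<dots> = (\<Sum>e\<in>?I. \<Sum>f\<in>?I. ?p (\<lambda>e f. strict R v f e) e f)
      + (\<Sum>e\<in>?I. \<Sum>f\<in>?I. ?p (\<lambda>e f. strict R v e f) e f)
      + (\<Sum>e\<in>?I. \<Sum>f\<in>?I. ?p (\<lambda>e f. R v f e \<and> R v e f) e f)"
    by (simp only: above' tie' swap)
  also have "\<dots> = (\<Sum>e\<in>?I. \<Sum>f\<in>?I. ?p (\<lambda>e f. strict R v f e) e f + ?p (\<lambda>e f. strict R v e f) e f
          + ?p (\<lambda>e f. R v f e \<and> R v e f) e f)"
    by (simp only: sum.distrib)
  also have "\<dots> = (\<Sum>e\<in>?I. \<Sum>f\<in>?I. x e * x f)"
    \<comment> \<open>exactly one of the three cases applies to each pair, by totality\<close>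
    by (intro sum.cong refl) (use pref_total in \<open>auto simp: strict_def\<close>)
  also have "\<dots> = (load v)\<^sup>2"
    unfolding load_def power2_eq_square sum_product by simp
  finally show ?thesis .
qed

lemma edge_slack_ge_2: "e \<in> E \<Longrightarrow> 2 \<le> (\<Sum>v\<in>e. 2 * above v e + tie v e)"
proof -
  assume e: "e \<in> E"
  then obtain a b where ab: "e = {a, b}" "a \<noteq> b" by (rule edgeE)
  show ?thesis
  proof (cases "e \<in> E1")
    case True
    then show ?thesis
      using E1_constraint[OF True] x_le_tie[OF e, of a] x_le_tie[OF e, of b] ab by simp
  next
    case False
    then have "e \<in> E2" using e E_split by auto
    then show ?thesis using E2_constraint[of e a] E2_constraint[of e b] ab by auto
  qed
qed

lemma weighted_slack_eq_load_squares:
  "(\<Sum>e\<in>E. x e * (\<Sum>v\<in>e. 2 * above v e + tie v e)) = (\<Sum>v\<in>V1 \<union> V2. (load v)\<^sup>2)"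
  by (simp add: sum_distrib_left sum_edges_vertices load_square)

lemma sum_load: "(\<Sum>v\<in>V1 \<union> V2. load v) = 2 * (\<Sum>e\<in>E. x e)"
proof -
  have "(\<Sum>v\<in>V1 \<union> V2. load v) = (\<Sum>e\<in>E. \<Sum>v\<in>e. x e)"
    unfolding load_def by (rule sum_edges_vertices[symmetric])
  also have "\<dots> = (\<Sum>e\<in>E. 2 * x e)"
    by (rule sum.cong[OF refl]) (erule edgeE, simp)
  finally show ?thesis by (simp add: sum_distrib_left)
qed

lemma load_square_le: "(load v)\<^sup>2 \<le> load v"
  using mult_left_le_one_le[OF load_nonneg load_nonneg load_le_1] by (simp add: power2_eq_square)

text \<open>Both sides of \<open>weighted_slack_eq_load_squares\<close> are squeezed: the left one is at
  least \<open>2 x(E) = \<Sum> load\<close>, the right one at most \<open>\<Sum> load\<close>.\<close>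
lemma complementary_slackness:
  "(\<forall>e\<in>E. 0 < x e \<longrightarrow> (\<Sum>v\<in>e. 2 * above v e + tie v e) = 2) \<and>
   (\<forall>v\<in>V1 \<union> V2. load v = (load v)\<^sup>2)"
proof -
  let ?L = "\<lambda>e. (\<Sum>v\<in>e. 2 * above v e + tie v e)"
  have edge_nonneg: "\<forall>e\<in>E. 0 \<le> x e * (?L e - 2)"
    using edge_slack_ge_2 x_nonneg by simp
  have vertex_nonneg: "\<forall>v\<in>V1 \<union> V2. 0 \<le> load v - (load v)\<^sup>2"
    using load_square_le by simp
  have "(\<Sum>e\<in>E. x e * (?L e - 2)) + (\<Sum>v\<in>V1 \<union> V2. load v - (load v)\<^sup>2) = 0"
    using weighted_slack_eq_load_squares sum_load
    by (simp add: sum_subtractf right_diff_distrib sum_distrib_right mult.commute)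
  moreover have "0 \<le> (\<Sum>e\<in>E. x e * (?L e - 2))"
    using edge_nonneg by (intro sum_nonneg) auto
  moreover have "0 \<le> (\<Sum>v\<in>V1 \<union> V2. load v - (load v)\<^sup>2)"
    using vertex_nonneg by (intro sum_nonneg) auto
  ultimately have "(\<Sum>e\<in>E. x e * (?L e - 2)) = 0" "(\<Sum>v\<in>V1 \<union> V2. load v - (load v)\<^sup>2) = 0"
    by linarith+
  then have "\<forall>e\<in>E. x e * (?L e - 2) = 0" "\<forall>v\<in>V1 \<union> V2. load v - (load v)\<^sup>2 = 0"
    using sum_nonneg_eq_0_iff[OF finite_edges, of "\<lambda>e. x e * (?L e - 2)"]
      sum_nonneg_eq_0_iff[OF finite_vertices, of "\<lambda>v. load v - (load v)\<^sup>2"]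
      edge_nonneg vertex_nonneg by auto
  then show ?thesis by auto
qed

lemma load_01: "load v = 0 \<or> load v = 1"
proof (cases "v \<in> V1 \<union> V2")
  case True
  then have "load v * (1 - load v) = 0"
    using complementary_slackness by (simp add: power2_eq_square algebra_simps)
  then show ?thesis by auto
qed (simp add: load_def inc_outside)

lemma positive_edge_tight:
  assumes e: "e \<in> E" and pos: "0 < x e" and uw: "e = {u, w}" "u \<in> V1" "w \<in> V2"
  shows "tie u e = tie w e" and "above u e + tie u e + above w e = 1"
    and "e \<in> E1 \<Longrightarrow> tie u e = x e"
proof -
  have "u \<noteq> w" using uw disjoint_sides by auto
  then have slack: "2 * above u e + tie u e + (2 * above w e + tie w e) = 2"
    using complementary_slackness e pos uw by auto
  have "tie u e = tie w e \<and> above u e + tie u e + above w e = 1 \<and> (e \<in> E1 \<longrightarrow> tie u e = x e)"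
  proof (cases "e \<in> E1")
    case True
    then show ?thesis
      using E1_constraint[OF True] slack x_le_tie[OF e, of u] x_le_tie[OF e, of w] uw \<open>u \<noteq> w\<close>
      by auto
  next
    case False
    then have "e \<in> E2" using e E_split by auto
    then show ?thesis
      using E2_constraint[of e u] E2_constraint[of e w] slack False uw \<open>u \<noteq> w\<close> by auto
  qed
  then show "tie u e = tie w e" "above u e + tie u e + above w e = 1" "e \<in> E1 \<Longrightarrow> tie u e = x e"
    by auto
qed

section \<open>Slicing a point of S by levels\<close>

definition clamp :: "real \<Rightarrow> real \<Rightarrow> real \<Rightarrow> real" where
  "clamp \<alpha> \<beta> t = min (max t \<alpha>) \<beta>"

lemma clamp_mono: "s \<le> t \<Longrightarrow> clamp \<alpha> \<beta> s \<le> clamp \<alpha> \<beta> t"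
  by (auto simp: clamp_def)

lemma clamp_split: "0 \<le> t \<Longrightarrow> t \<le> 1 \<Longrightarrow> 0 < \<theta> \<Longrightarrow> \<theta> < 1 \<Longrightarrow> clamp 0 \<theta> t + clamp \<theta> 1 t = t + \<theta>"
  by (auto simp: clamp_def min_def max_def)

lemma sum_positive_part: "finite A \<Longrightarrow> sum x A = sum x {f \<in> A. 0 < x f}"
  by (rule sum.mono_neutral_right) (auto simp: less_le x_nonneg)

lemma pref_minimal:
  assumes "finite D" and "D \<noteq> {}" and "D \<subseteq> inc E v"
  obtains f0 where "f0 \<in> D" "\<forall>f\<in>D. R v f f0"
  using assms
proof (induction D arbitrary: thesis rule: finite_ne_induct)
  case (singleton f)
  then show ?case using pref_refl by auto
next
  case (insert g D)
  then obtain f0 where f0: "f0 \<in> D" "\<forall>f\<in>D. R v f f0" by auto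
  show ?case
  proof (cases "R v g f0")
    case True
    then show ?thesis using insert.prems f0 by auto
  next
    case False
    then have "R v f0 g" using pref_total[of g v f0] insert.prems f0 by auto
    then have "\<forall>f\<in>insert g D. R v f g"
      using f0 pref_trans[of _ v f0 g] pref_refl[of g v] insert.prems by blast
    then show ?thesis using insert.prems by auto
  qed
qed

definition pos_upper :: "'v \<Rightarrow> 'v set set \<Rightarrow> bool" where
  "pos_upper v D \<longleftrightarrow> D \<subseteq> {f \<in> inc E v. 0 < x f} \<and>
     (\<forall>f\<in>D. \<forall>g\<in>inc E v. 0 < x g \<longrightarrow> R v g f \<longrightarrow> g \<in> D)"

lemma indiff_same_classes:
  assumes f: "f \<in> inc E v" and f0: "f0 \<in> inc E v" and "R v f f0" "R v f0 f"
  shows "better E R v f = better E R v f0" and "indiff E R v f = indiff E R v f0"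
  using pref_trans[OF _ f f0 _ \<open>R v f f0\<close>] pref_trans[OF _ f0 f _ \<open>R v f0 f\<close>]
    pref_trans[OF f f0 _ \<open>R v f f0\<close>] pref_trans[OF f0 f _ \<open>R v f0 f\<close>]
  unfolding better_def indiff_def strict_def by blast+

lemma pos_upper_minimal_class:
  assumes D: "pos_upper v D" and f0: "f0 \<in> D" "\<forall>f\<in>D. R v f f0"
  shows "above v f0 = sum x {f \<in> D. \<not> R v f0 f}" and "tie v f0 = sum x {f \<in> D. R v f0 f}"
    and "pos_upper v {f \<in> D. \<not> R v f0 f}"
proof -
  have Dinc: "D \<subseteq> inc E v" and Dpos: "\<And>f. f \<in> D \<Longrightarrow> 0 < x f"
    and up: "\<And>f g. f \<in> D \<Longrightarrow> g \<in> inc E v \<Longrightarrow> 0 < x g \<Longrightarrow> R v g f \<Longrightarrow> g \<in> D"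
    using D by (auto simp: pos_upper_def)
  have f0inc: "f0 \<in> inc E v" using Dinc f0 by auto
  have "above v f0 = sum x {f \<in> better E R v f0. 0 < x f}"
    unfolding above_def by (rule sum_positive_part[OF finite_better])
  also have "{f \<in> better E R v f0. 0 < x f} = {f \<in> D. \<not> R v f0 f}"
  proof (intro set_eqI iffI)
    fix f assume "f \<in> {f \<in> better E R v f0. 0 < x f}"
    then show "f \<in> {f \<in> D. \<not> R v f0 f}"
      using up[OF f0(1)] by (auto simp: better_def strict_def)
  next
    fix f assume "f \<in> {f \<in> D. \<not> R v f0 f}"
    then show "f \<in> {f \<in> better E R v f0. 0 < x f}"
      using f0(2) Dinc Dpos by (auto simp: better_def strict_def)
  qed
  finally show "above v f0 = sum x {f \<in> D. \<not> R v f0 f}" .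
  have "tie v f0 = sum x {f \<in> indiff E R v f0. 0 < x f}"
    unfolding tie_def by (rule sum_positive_part[OF finite_indiff])
  also have "{f \<in> indiff E R v f0. 0 < x f} = {f \<in> D. R v f0 f}"
  proof (intro set_eqI iffI)
    fix f assume "f \<in> {f \<in> indiff E R v f0. 0 < x f}"
    then show "f \<in> {f \<in> D. R v f0 f}"
      using up[OF f0(1)] by (auto simp: indiff_def)
  next
    fix f assume "f \<in> {f \<in> D. R v f0 f}"
    then show "f \<in> {f \<in> indiff E R v f0. 0 < x f}"
      using f0(2) Dinc Dpos by (auto simp: indiff_def)
  qed
  finally show "tie v f0 = sum x {f \<in> D. R v f0 f}" .
  have "g \<in> {f \<in> D. \<not> R v f0 f}"
    if f: "f \<in> D" "\<not> R v f0 f" and g: "g \<in> inc E v" "0 < x g" "R v g f" for f g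
  proof -
    have "\<not> R v f0 g" using pref_trans[OF f0inc g(1) _ _ g(3)] f Dinc by auto
    then show ?thesis using up[OF f(1) g] by simp
  qed
  then show "pos_upper v {f \<in> D. \<not> R v f0 f}"
    using D unfolding pos_upper_def by blast
qed

text \<open>Each indifference class of D covers the interval between \<open>above\<close> and
  \<open>above + tie\<close> of its members, and these intervals tile \<open>[0, x(D)]\<close>.\<close>
lemma telescoping_sum:
  assumes "pos_upper v D"
  shows "(\<Sum>f\<in>D. x f / tie v f * (H (above v f + tie v f) - H (above v f))) = H (sum x D) - H 0"
  using assms
proof (induction "card D" arbitrary: D rule: less_induct)
  case less
  have Dinc: "D \<subseteq> inc E v" and Dpos: "\<forall>f\<in>D. 0 < x f"
    using less.prems by (auto simp: pos_upper_def)
  have finD: "finite D" using finite_subset[OF Dinc finite_inc] .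
  show ?case
  proof (cases "D = {}")
    case False
    then obtain f0 where f0: "f0 \<in> D" "\<forall>f\<in>D. R v f f0"
      using pref_minimal[OF finD _ Dinc] by blast
    define T where "T = {f \<in> D. R v f0 f}"
    define D' where "D' = {f \<in> D. \<not> R v f0 f}"
    have above0: "above v f0 = sum x D'" and tie0: "tie v f0 = sum x T"
      and upper': "pos_upper v D'"
      using pos_upper_minimal_class[OF less.prems f0] by (simp_all add: T_def D'_def)
    have f0T: "f0 \<in> T" using f0 Dinc pref_refl by (auto simp: T_def)
    have "card D' < card D"
      using f0T by (intro psubset_card_mono[OF finD]) (auto simp: T_def D'_def)
    then have IH: "(\<Sum>f\<in>D'. x f / tie v f * (H (above v f + tie v f) - H (above v f)))
        = H (sum x D') - H 0"
      using upper' by (rule less.hyps)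
    have "x f0 \<le> sum x T" using finD f0T by (intro member_le_sum) (auto simp: x_nonneg T_def)
    then have tie_pos: "0 < tie v f0" using tie0 Dpos f0 by auto
    have "(\<Sum>f\<in>T. x f / tie v f * (H (above v f + tie v f) - H (above v f)))
        = (\<Sum>f\<in>T. x f * ((H (above v f0 + tie v f0) - H (above v f0)) / tie v f0))"
    proof (intro sum.cong refl)
      fix f assume "f \<in> T"
      then have "f \<in> inc E v" "R v f f0" "R v f0 f" using f0 Dinc by (auto simp: T_def)
      then have "above v f = above v f0" "tie v f = tie v f0"
        using indiff_same_classes[of f v f0] f0 Dinc by (auto simp: above_def tie_def)
      then show "x f / tie v f * (H (above v f + tie v f) - H (above v f))
          = x f * ((H (above v f0 + tie v f0) - H (above v f0)) / tie v f0)" by simp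
    qed
    also have "\<dots> = sum x T * ((H (above v f0 + tie v f0) - H (above v f0)) / tie v f0)"
      by (rule sum_distrib_right[symmetric])
    also have "\<dots> = H (above v f0 + tie v f0) - H (above v f0)"
      using tie0 tie_pos by simp
    finally have class_sum: "(\<Sum>f\<in>T. x f / tie v f * (H (above v f + tie v f) - H (above v f)))
        = H (sum x D' + sum x T) - H (sum x D')"
      using above0 tie0 by simp
    have parts: "D = D' \<union> T" "D' \<inter> T = {}" "finite D'" "finite T"
      using finD by (auto simp: T_def D'_def)
    show ?thesis
      using IH class_sum parts by (simp add: sum.union_disjoint)
  qed simp
qed

definition left_end :: "'v set \<Rightarrow> 'v" where
  "left_end e = (SOME a. a \<in> e \<and> a \<in> V1)"

lemma left_end: "e = {a, b} \<Longrightarrow> a \<in> V1 \<Longrightarrow> b \<in> V2 \<Longrightarrow> left_end e = a"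
  unfolding left_end_def using disjoint_sides by (intro some_equality) auto

text \<open>At its \<open>V1\<close>-end a positive edge e occupies the interval
  \<open>[above, above + tie]\<close> of \<open>[0, 1]\<close> with density \<open>x e / tie\<close>; by tightness its \<open>V2\<close>-end
  sees the mirror image of the same interval.  \<open>slice \<alpha> \<beta>\<close> keeps the part lying in
  \<open>[\<alpha>, \<beta>]\<close>, rescaled to total mass one per saturated vertex.\<close>
definition slice :: "real \<Rightarrow> real \<Rightarrow> 'v set \<Rightarrow> real" where
  "slice \<alpha> \<beta> e = (if 0 < x e then x e / tie (left_end e) e *
     (clamp \<alpha> \<beta> (above (left_end e) e + tie (left_end e) e) - clamp \<alpha> \<beta> (above (left_end e) e))
     / (\<beta> - \<alpha>) else 0)"

definition side_clamp :: "real \<Rightarrow> real \<Rightarrow> 'v \<Rightarrow> real \<Rightarrow> real" where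
  "side_clamp \<alpha> \<beta> v t = (if v \<in> V1 then clamp \<alpha> \<beta> t else - clamp \<alpha> \<beta> (1 - t))"

lemma slice_zero: "\<not> 0 < x e \<Longrightarrow> slice \<alpha> \<beta> e = 0"
  by (simp add: slice_def)

lemma slice_at:
  assumes f: "f \<in> inc E v" and pos: "0 < x f"
  shows "slice \<alpha> \<beta> f = x f / tie v f
    * (side_clamp \<alpha> \<beta> v (above v f + tie v f) - side_clamp \<alpha> \<beta> v (above v f)) / (\<beta> - \<alpha>)"
proof -
  have fE: "f \<in> E" and vf: "v \<in> f" using f by (auto simp: inc_def)
  obtain u w where uw: "f = {u, w}" "u \<in> V1" "w \<in> V2" "u \<noteq> w" using fE by (rule edgeE)
  have lu: "left_end f = u" using uw by (intro left_end) auto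
  show ?thesis
  proof (cases "v = u")
    case True
    then show ?thesis using pos lu uw by (simp add: slice_def side_clamp_def)
  next
    case False
    then have vw: "v = w" and wV1: "w \<notin> V1" using vf uw disjoint_sides by auto
    have "tie u f = tie w f" and "above u f + tie u f + above w f = 1"
      using positive_edge_tight[OF fE pos uw(1-3)] by auto
    then have "1 - (above w f + tie w f) = above u f" "1 - above w f = above u f + tie u f"
      by linarith+
    then have "side_clamp \<alpha> \<beta> w (above w f + tie w f) - side_clamp \<alpha> \<beta> w (above w f)
        = clamp \<alpha> \<beta> (above u f + tie u f) - clamp \<alpha> \<beta> (above u f)"
      using wV1 by (simp add: side_clamp_def)
    then show ?thesis
      using pos lu vw \<open>tie u f = tie w f\<close> by (simp add: slice_def)
  qed
qed

lemma slice_sum_upper: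
  assumes W: "W \<subseteq> inc E v" and up: "\<forall>f\<in>W. \<forall>g\<in>inc E v. R v g f \<longrightarrow> g \<in> W"
  shows "sum (slice \<alpha> \<beta>) W = (side_clamp \<alpha> \<beta> v (sum x W) - side_clamp \<alpha> \<beta> v 0) / (\<beta> - \<alpha>)"
proof -
  let ?D = "{f \<in> W. 0 < x f}"
  have finW: "finite W" using finite_subset[OF W finite_inc] .
  have "sum (slice \<alpha> \<beta>) W = sum (slice \<alpha> \<beta>) ?D"
    by (rule sum.mono_neutral_right[OF finW]) (auto simp: slice_zero)
  also have "\<dots> = (\<Sum>f\<in>?D. x f / tie v f
      * (side_clamp \<alpha> \<beta> v (above v f + tie v f) - side_clamp \<alpha> \<beta> v (above v f))) / (\<beta> - \<alpha>)"
    unfolding sum_divide_distrib using W by (intro sum.cong refl) (auto simp: slice_at)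
  also have "(\<Sum>f\<in>?D. x f / tie v f
      * (side_clamp \<alpha> \<beta> v (above v f + tie v f) - side_clamp \<alpha> \<beta> v (above v f)))
      = side_clamp \<alpha> \<beta> v (sum x ?D) - side_clamp \<alpha> \<beta> v 0"
    by (rule telescoping_sum) (use W up in \<open>auto simp: pos_upper_def\<close>)
  also have "sum x ?D = sum x W" using sum_positive_part[OF finW] by simp
  finally show ?thesis .
qed

lemma slice_sum_better:
  assumes e: "e \<in> inc E v"
  shows "sum (slice \<alpha> \<beta>) (better E R v e)
    = (side_clamp \<alpha> \<beta> v (above v e) - side_clamp \<alpha> \<beta> v 0) / (\<beta> - \<alpha>)"
  unfolding above_def
proof (rule slice_sum_upper[OF better_subset], intro ballI impI)
  fix f g assume f: "f \<in> better E R v e" and g: "g \<in> inc E v" "R v g f"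
  then have fi: "f \<in> inc E v" "R v f e" "\<not> R v e f" by (auto simp: better_def strict_def)
  have "R v g e" using pref_trans[OF g(1) fi(1) e g(2) fi(2)] .
  moreover have "\<not> R v e g" using pref_trans[OF e g(1) fi(1) _ g(2)] fi(3) by blast
  ultimately show "g \<in> better E R v e" using g by (auto simp: better_def strict_def)
qed

lemma slice_sum_indiff:
  assumes e: "e \<in> inc E v"
  shows "sum (slice \<alpha> \<beta>) (indiff E R v e)
    = (side_clamp \<alpha> \<beta> v (above v e + tie v e) - side_clamp \<alpha> \<beta> v (above v e)) / (\<beta> - \<alpha>)"
proof -
  let ?W = "{f \<in> inc E v. R v f e}"
  have "sum x ?W = above v e + tie v e"
    unfolding above_def tie_def weakly_better_split
    by (rule sum.union_disjoint) (simp_all add: finite_better finite_indiff weakly_better_split)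
  then have "sum (slice \<alpha> \<beta>) ?W
      = (side_clamp \<alpha> \<beta> v (above v e + tie v e) - side_clamp \<alpha> \<beta> v 0) / (\<beta> - \<alpha>)"
    using slice_sum_upper[of ?W v] pref_trans[OF _ _ e] by auto
  moreover have "sum (slice \<alpha> \<beta>) ?W
      = sum (slice \<alpha> \<beta>) (better E R v e) + sum (slice \<alpha> \<beta>) (indiff E R v e)"
    unfolding weakly_better_split
    by (rule sum.union_disjoint) (simp_all add: finite_better finite_indiff weakly_better_split)
  ultimately show ?thesis using slice_sum_better[OF e] by (simp add: diff_divide_distrib)
qed

lemma slice_sum_inc:
  "sum (slice \<alpha> \<beta>) (inc E v) = (side_clamp \<alpha> \<beta> v (load v) - side_clamp \<alpha> \<beta> v 0) / (\<beta> - \<alpha>)"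
  unfolding load_def by (rule slice_sum_upper) auto

lemma slice_nonneg:
  assumes "\<alpha> < \<beta>"
  shows "0 \<le> slice \<alpha> \<beta> e"
proof (cases "0 < x e")
  case True
  then have "e \<in> E" using x_outside by force
  then obtain u w where uw: "e = {u, w}" "u \<in> V1" "w \<in> V2" by (rule edgeE)
  have "0 \<le> tie u e" by (rule tie_nonneg)
  then have "clamp \<alpha> \<beta> (above u e) \<le> clamp \<alpha> \<beta> (above u e + tie u e)" by (intro clamp_mono) simp
  then show ?thesis
    using True assms left_end[OF uw] tie_nonneg[of u e]
    by (auto simp: slice_def intro!: divide_nonneg_pos mult_nonneg_nonneg)
qed (simp add: slice_zero)

lemma slice_load_le_1:
  assumes "0 \<le> \<alpha>" "\<alpha> < \<beta>" "\<beta> \<le> 1"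
  shows "sum (slice \<alpha> \<beta>) (inc E v) \<le> 1"
proof -
  have "side_clamp \<alpha> \<beta> v (load v) - side_clamp \<alpha> \<beta> v 0 \<le> \<beta> - \<alpha>"
    using load_01[of v] assms by (auto simp: side_clamp_def clamp_def)
  then show ?thesis using slice_sum_inc[of \<alpha> \<beta> v] assms by simp
qed

lemma slice_class_sums:
  assumes e: "e \<in> E" and uw: "e = {u, w}" "u \<in> V1" "w \<in> V2" and ab: "0 \<le> \<alpha>" "\<alpha> < \<beta>" "\<beta> \<le> 1"
  shows "sum (slice \<alpha> \<beta>) (better E R u e) = (clamp \<alpha> \<beta> (above u e) - \<alpha>) / (\<beta> - \<alpha>)"
    and "sum (slice \<alpha> \<beta>) (better E R w e) = (\<beta> - clamp \<alpha> \<beta> (1 - above w e)) / (\<beta> - \<alpha>)"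
    and "sum (slice \<alpha> \<beta>) (indiff E R u e)
      = (clamp \<alpha> \<beta> (above u e + tie u e) - clamp \<alpha> \<beta> (above u e)) / (\<beta> - \<alpha>)"
    and "sum (slice \<alpha> \<beta>) (indiff E R w e)
      = (clamp \<alpha> \<beta> (1 - above w e) - clamp \<alpha> \<beta> (1 - (above w e + tie w e))) / (\<beta> - \<alpha>)"
proof -
  have w: "w \<notin> V1" using uw disjoint_sides by auto
  have inc: "e \<in> inc E u" "e \<in> inc E w" using e uw by (auto simp: inc_def)
  have ends: "clamp \<alpha> \<beta> 0 = \<alpha>" "clamp \<alpha> \<beta> 1 = \<beta>" using ab by (auto simp: clamp_def)
  show "sum (slice \<alpha> \<beta>) (better E R u e) = (clamp \<alpha> \<beta> (above u e) - \<alpha>) / (\<beta> - \<alpha>)"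
    using slice_sum_better[OF inc(1)] uw ends by (simp add: side_clamp_def)
  show "sum (slice \<alpha> \<beta>) (better E R w e) = (\<beta> - clamp \<alpha> \<beta> (1 - above w e)) / (\<beta> - \<alpha>)"
    using slice_sum_better[OF inc(2)] w ends by (simp add: side_clamp_def)
  show "sum (slice \<alpha> \<beta>) (indiff E R u e)
      = (clamp \<alpha> \<beta> (above u e + tie u e) - clamp \<alpha> \<beta> (above u e)) / (\<beta> - \<alpha>)"
    using slice_sum_indiff[OF inc(1)] uw by (simp add: side_clamp_def)
  show "sum (slice \<alpha> \<beta>) (indiff E R w e)
      = (clamp \<alpha> \<beta> (1 - above w e) - clamp \<alpha> \<beta> (1 - (above w e + tie w e))) / (\<beta> - \<alpha>)"
    using slice_sum_indiff[OF inc(2)] w by (simp add: side_clamp_def)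
qed

lemma slice_E1_constraint:
  assumes e: "e \<in> E1" and ab: "0 \<le> \<alpha>" "\<alpha> < \<beta>" "\<beta> \<le> 1"
  shows "1 \<le> slice \<alpha> \<beta> e + (\<Sum>v\<in>e. sum (slice \<alpha> \<beta>) (better E R v e))"
proof -
  let ?G = "clamp \<alpha> \<beta>"
  have eE: "e \<in> E" using e E_split by simp
  then obtain u w where uw: "e = {u, w}" "u \<in> V1" "w \<in> V2" "u \<noteq> w" by (rule edgeE)
  have better_sum: "(\<Sum>v\<in>e. sum (slice \<alpha> \<beta>) (better E R v e))
      = (?G (above u e) - \<alpha> + (\<beta> - ?G (1 - above w e))) / (\<beta> - \<alpha>)"
    using slice_class_sums(1,2)[OF eE uw(1-3) ab] uw(1,4) by (simp add: add_divide_distrib)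
  show ?thesis
  proof (cases "0 < x e")
    case True
    have "tie u e = x e" "above u e + tie u e + above w e = 1"
      using positive_edge_tight[OF eE True uw(1-3)] e by auto
    then have "above u e + tie u e = 1 - above w e" by linarith
    then have "?G (above u e + tie u e) = ?G (1 - above w e)" by simp
    then have "slice \<alpha> \<beta> e = (?G (1 - above w e) - ?G (above u e)) / (\<beta> - \<alpha>)"
      using True \<open>tie u e = x e\<close> left_end[OF uw(1-3)] by (simp add: slice_def)
    then show ?thesis using better_sum ab by (simp add: add_divide_distrib[symmetric])
  next
    case False
    have "1 - above w e \<le> above u e"
      using E1_constraint[OF e] uw False x_nonneg[of e] by simp
    then have "?G (1 - above w e) \<le> ?G (above u e)" by (rule clamp_mono)
    then show ?thesis using better_sum False ab by (simp add: slice_zero le_divide_eq_1_pos)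
  qed
qed

lemma slice_E2_constraint:
  assumes e: "e \<in> E2" and v: "v \<in> e" and ab: "0 \<le> \<alpha>" "\<alpha> < \<beta>" "\<beta> \<le> 1"
  shows "1 \<le> sum (slice \<alpha> \<beta>) (indiff E R v e) + (\<Sum>w\<in>e. sum (slice \<alpha> \<beta>) (better E R w e))"
proof -
  let ?G = "clamp \<alpha> \<beta>"
  have eE: "e \<in> E" using e E_split by simp
  then obtain u w where uw: "e = {u, w}" "u \<in> V1" "w \<in> V2" "u \<noteq> w" by (rule edgeE)
  note sums = slice_class_sums[OF eE uw(1-3) ab]
  have better_sum: "(\<Sum>v\<in>e. sum (slice \<alpha> \<beta>) (better E R v e))
      = (?G (above u e) - \<alpha> + (\<beta> - ?G (1 - above w e))) / (\<beta> - \<alpha>)"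
    using sums(1,2) uw(1,4) by (simp add: add_divide_distrib)
  have cu: "1 - above w e \<le> above u e + tie u e" and cw: "1 - (above w e + tie w e) \<le> above u e"
    using E2_constraint[OF e, of u] E2_constraint[OF e, of w] uw by auto
  show ?thesis
  proof (cases "v = u")
    case True
    have "sum (slice \<alpha> \<beta>) (indiff E R v e) + (\<Sum>v\<in>e. sum (slice \<alpha> \<beta>) (better E R v e))
        = (?G (above u e + tie u e) - \<alpha> + \<beta> - ?G (1 - above w e)) / (\<beta> - \<alpha>)"
      unfolding True sums(3) better_sum by (simp add: diff_divide_distrib add_divide_distrib)
    moreover have "?G (1 - above w e) \<le> ?G (above u e + tie u e)" using cu by (rule clamp_mono)
    ultimately show ?thesis using ab by (simp add: le_divide_eq_1_pos)
  next
    case False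
    then have "v = w" using v uw by auto
    have "sum (slice \<alpha> \<beta>) (indiff E R v e) + (\<Sum>v\<in>e. sum (slice \<alpha> \<beta>) (better E R v e))
        = (?G (above u e) - \<alpha> + \<beta> - ?G (1 - (above w e + tie w e))) / (\<beta> - \<alpha>)"
      unfolding \<open>v = w\<close> sums(4) better_sum by (simp add: diff_divide_distrib add_divide_distrib)
    moreover have "?G (1 - (above w e + tie w e)) \<le> ?G (above u e)" using cw by (rule clamp_mono)
    ultimately show ?thesis using ab by (simp add: le_divide_eq_1_pos)
  qed
qed

lemma slice_in_S:
  assumes "0 \<le> \<alpha>" "\<alpha> < \<beta>" "\<beta> \<le> 1"
  shows "slice \<alpha> \<beta> \<in> S_poly (V1 \<union> V2) E1 E2 R"
  using assms slice_nonneg slice_load_le_1 slice_E1_constraint slice_E2_constraint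
    x_outside slice_zero E_split
  unfolding S_poly_def E_split[symmetric] by auto

lemma x_slice_combination:
  assumes "0 < \<theta>" "\<theta> < 1"
  shows "x = (\<lambda>e. \<theta> * slice 0 \<theta> e + (1 - \<theta>) * slice \<theta> 1 e)"
proof
  fix e
  show "x e = \<theta> * slice 0 \<theta> e + (1 - \<theta>) * slice \<theta> 1 e"
  proof (cases "0 < x e")
    case True
    then have "e \<in> E" using x_outside by force
    then obtain u w where uw: "e = {u, w}" "u \<in> V1" "w \<in> V2" by (rule edgeE)
    define a where "a = above u e"
    define t where "t = tie u e"
    have t: "0 < t" using x_le_tie[OF \<open>e \<in> E\<close>, of u] uw True by (auto simp: t_def)
    have range: "0 \<le> a" "a + t \<le> 1"
      using above_nonneg above_tie_le_load[of u e] load_le_1[of u] by (auto simp: a_def t_def)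
    have "\<theta> * slice 0 \<theta> e = x e / t * (clamp 0 \<theta> (a + t) - clamp 0 \<theta> a)"
      using True assms left_end[OF uw] by (simp add: slice_def a_def t_def)
    moreover have "(1 - \<theta>) * slice \<theta> 1 e = x e / t * (clamp \<theta> 1 (a + t) - clamp \<theta> 1 a)"
      using True assms left_end[OF uw] by (simp add: slice_def a_def t_def)
    ultimately have "\<theta> * slice 0 \<theta> e + (1 - \<theta>) * slice \<theta> 1 e
        = x e / t * ((clamp 0 \<theta> (a + t) + clamp \<theta> 1 (a + t)) - (clamp 0 \<theta> a + clamp \<theta> 1 a))"
      by (simp add: algebra_simps)
    also have "\<dots> = x e"
      using clamp_split[of "a + t" \<theta>] clamp_split[of a \<theta>] range t assms by simp
    finally show ?thesis by simp
  qed (use x_nonneg[of e] in \<open>simp add: slice_zero\<close>)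
qed

lemma extreme_left_end_degenerate:
  assumes ext: "extreme_pt x (S_poly (V1 \<union> V2) E1 E2 R)" and f: "f \<in> E" "0 < x f"
  shows "above (left_end f) f = 0" and "tie (left_end f) f = 1"
proof -
  define u where "u = left_end f"
  define a where "a = above u f"
  define t where "t = tie u f"
  obtain u' w where "f = {u', w}" "u' \<in> V1" "w \<in> V2" using f(1) by (rule edgeE)
  then have "u \<in> f" using left_end by (auto simp: u_def)
  then have t: "0 < t" using x_le_tie[OF f(1) \<open>u \<in> f\<close>] f(2) unfolding t_def by linarith
  have range: "0 \<le> a" "a + t \<le> 1"
    using above_nonneg above_tie_le_load[of u f] load_le_1[of u] by (auto simp: a_def t_def)
  have slice_f: "slice \<alpha> \<beta> f = x f / t * (clamp \<alpha> \<beta> (a + t) - clamp \<alpha> \<beta> a) / (\<beta> - \<alpha>)"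
    for \<alpha> \<beta> using f(2) by (simp add: slice_def a_def t_def u_def)
  \<comment> \<open>a cut at \<open>\<theta>\<close> strictly inside \<open>[0, 1]\<close> at an end of the interval of f
    puts f into only one of the two slices\<close>
  have no_cut: False if \<theta>: "0 < \<theta>" "\<theta> < 1" and cut: "\<theta> = a \<or> \<theta> = a + t" for \<theta>
  proof -
    have "slice 0 \<theta> \<in> S_poly (V1 \<union> V2) E1 E2 R" "slice \<theta> 1 \<in> S_poly (V1 \<union> V2) E1 E2 R"
      using \<theta> by (simp_all add: slice_in_S)
    then have "slice 0 \<theta> = slice \<theta> 1"
      by (rule extreme_ptD[OF ext _ _ \<theta> x_slice_combination[OF \<theta>]])
    then have "slice 0 \<theta> f = slice \<theta> 1 f" by simp
    then show False using \<theta> cut t range f(2) by (auto simp: slice_f clamp_def)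
  qed
  have "a = 0"
  proof (rule ccontr)
    assume "a \<noteq> 0"
    show False by (rule no_cut[of a]) (use range t \<open>a \<noteq> 0\<close> in auto)
  qed
  moreover have "a + t = 1"
  proof (rule ccontr)
    assume "a + t \<noteq> 1"
    show False by (rule no_cut[of "a + t"]) (use range t \<open>a + t \<noteq> 1\<close> in auto)
  qed
  ultimately show "above (left_end f) f = 0" "tie (left_end f) f = 1"
    by (simp_all add: a_def t_def u_def)
qed

section \<open>Extreme points are integral\<close>

lemma load_eq_1: "f \<in> inc E v \<Longrightarrow> 0 < x f \<Longrightarrow> load v = 1"
  using x_le_load[of f v] load_01[of v] by auto

lemma extreme_degenerate:
  assumes ext: "extreme_pt x (S_poly (V1 \<union> V2) E1 E2 R)" and f: "f \<in> inc E v" "0 < x f"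
  shows "above v f = 0" and "tie v f = 1"
proof -
  have fE: "f \<in> E" "v \<in> f" using f(1) by (auto simp: inc_def)
  obtain u w where uw: "f = {u, w}" "u \<in> V1" "w \<in> V2" using fE(1) by (rule edgeE)
  have "above u f = 0" "tie u f = 1"
    using extreme_left_end_degenerate[OF ext fE(1) f(2)] left_end[OF uw] by simp_all
  moreover have "tie u f = tie w f" "above u f + tie u f + above w f = 1"
    using positive_edge_tight[OF fE(1) f(2) uw] by auto
  ultimately show "above v f = 0" "tie v f = 1" using fE(2) uw by auto
qed

lemma extreme_positive_indiff:
  assumes ext: "extreme_pt x (S_poly (V1 \<union> V2) E1 E2 R)"
    and f: "f \<in> inc E v" "0 < x f" and g: "g \<in> inc E v" "0 < x g"
  shows "g \<in> indiff E R v f"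
proof (rule ccontr)
  assume "g \<notin> indiff E R v f"
  then have "tie v f + x g = sum x (insert g (indiff E R v f))"
    unfolding tie_def by (simp add: finite_indiff)
  also have "\<dots> \<le> load v"
    unfolding load_def using g indiff_subset by (intro sum_mono2[OF finite_inc]) (auto simp: x_nonneg)
  finally show False using extreme_degenerate(2)[OF ext f] load_le_1[of v] g(2) by simp
qed

lemma extreme_class_all_or_none:
  assumes ext: "extreme_pt x (S_poly (V1 \<union> V2) E1 E2 R)" and e: "e \<in> inc E v"
    and A: "A = better E R v e \<or> A = indiff E R v e"
  shows "(\<forall>g\<in>inc E v. 0 < x g \<longrightarrow> g \<in> A) \<or> (\<forall>g\<in>inc E v. 0 < x g \<longrightarrow> g \<notin> A)"
proof (rule ccontr)
  assume "\<not> ?thesis"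
  then obtain g1 g2 where g: "g1 \<in> inc E v" "0 < x g1" "g1 \<notin> A" "g2 \<in> inc E v" "0 < x g2" "g2 \<in> A"
    by blast
  have "R v g1 g2" "R v g2 g1"
    using extreme_positive_indiff[OF ext g(4,5) g(1,2)] by (auto simp: indiff_def)
  then have "R v g1 e \<longleftrightarrow> R v g2 e" "R v e g1 \<longleftrightarrow> R v e g2"
    using pref_trans[OF g(1) g(4) e] pref_trans[OF g(4) g(1) e]
      pref_trans[OF e g(1) g(4)] pref_trans[OF e g(4) g(1)] by blast+
  then show False using A g by (auto simp: better_def indiff_def strict_def)
qed

lemma sum_all_or_none:
  assumes d0: "\<And>g. \<not> 0 < x g \<Longrightarrow> d g = 0" and dv: "sum d (inc E v) = 0" and A: "A \<subseteq> inc E v"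
    and all_or_none: "(\<forall>g\<in>inc E v. 0 < x g \<longrightarrow> g \<in> A) \<or> (\<forall>g\<in>inc E v. 0 < x g \<longrightarrow> g \<notin> A)"
  shows "sum d A = 0"
  using all_or_none
proof
  assume "\<forall>g\<in>inc E v. 0 < x g \<longrightarrow> g \<in> A"
  then have "sum d (inc E v) = sum d A"
    by (intro sum.mono_neutral_right[OF finite_inc A]) (use d0 in blast)
  then show ?thesis using dv by simp
next
  assume "\<forall>g\<in>inc E v. 0 < x g \<longrightarrow> g \<notin> A"
  then show ?thesis by (intro sum.neutral) (use d0 A in blast)
qed

lemma perturbation_in_S:
  assumes outside: "\<And>e. e \<notin> E \<Longrightarrow> d e = 0" and on_E1: "\<And>e. e \<in> E1 \<Longrightarrow> d e = 0"
    and vertex: "\<And>v. sum d (inc E v) = 0"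
    and better: "\<And>v e. e \<in> inc E v \<Longrightarrow> sum d (better E R v e) = 0"
    and indiff: "\<And>v e. e \<in> inc E v \<Longrightarrow> sum d (indiff E R v e) = 0"
    and nonneg: "\<And>e. 0 \<le> x e + d e"
  shows "(\<lambda>e. x e + d e) \<in> S_poly (V1 \<union> V2) E1 E2 R"
proof -
  let ?y = "\<lambda>e. x e + d e"
  have "\<And>v. sum ?y (inc E v) = load v"
    using vertex by (simp add: load_def sum.distrib)
  moreover have "sum ?y (indiff E R v e) = tie v e" if "e \<in> E" "v \<in> e" for v e
    using indiff[of e v] that by (simp add: tie_def sum.distrib inc_def)
  moreover have "(\<Sum>v\<in>e. sum ?y (better E R v e)) = (\<Sum>v\<in>e. above v e)" if "e \<in> E" for e
    using better that by (intro sum.cong refl) (simp add: above_def sum.distrib inc_def)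
  ultimately have
    "\<And>e. e \<in> E1 \<Longrightarrow> 1 \<le> ?y e + (\<Sum>v\<in>e. sum ?y (better E R v e))"
    "\<And>e v. e \<in> E2 \<Longrightarrow> v \<in> e \<Longrightarrow> 1 \<le> sum ?y (indiff E R v e) + (\<Sum>w\<in>e. sum ?y (better E R w e))"
    using E1_constraint E2_constraint on_E1 E_split by auto
  then show ?thesis
    using load_le_1 nonneg x_outside outside \<open>\<And>v. sum ?y (inc E v) = load v\<close>
    unfolding S_poly_def E_split[symmetric] by auto
qed

definition fractional_edges :: "'v set set" where
  "fractional_edges = {e \<in> E. 0 < x e \<and> x e < 1}"

lemma fractional_edges_min_degree_two:
  "\<forall>e\<in>fractional_edges. \<forall>v\<in>e. \<exists>f\<in>fractional_edges. f \<noteq> e \<and> v \<in> f"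
proof (intro ballI)
  fix e v assume e: "e \<in> fractional_edges" and v: "v \<in> e"
  have ei: "e \<in> inc E v" using e v by (auto simp: fractional_edges_def inc_def)
  have rest: "sum x (inc E v - {e}) = 1 - x e"
    using load_eq_1[OF ei] ei e finite_inc unfolding load_def fractional_edges_def
    by (simp add: sum_diff1)
  have "\<exists>f\<in>inc E v - {e}. 0 < x f"
  proof (rule ccontr)
    assume "\<not> ?thesis"
    then have "sum x (inc E v - {e}) = 0"
      by (intro sum.neutral) (metis x_nonneg order.not_eq_order_implies_strict)
    then show False using rest e by (simp add: fractional_edges_def)
  qed
  then obtain f where f: "f \<in> inc E v - {e}" "0 < x f" by blast
  have "x f \<le> sum x (inc E v - {e})"
    using f finite_inc by (intro member_le_sum) (auto simp: x_nonneg)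
  then have "x f < 1" using rest e by (auto simp: fractional_edges_def)
  then show "\<exists>f\<in>fractional_edges. f \<noteq> e \<and> v \<in> f"
    using f by (auto simp: fractional_edges_def inc_def)
qed

lemma small_multiple_below_x:
  assumes "finite F" and pos: "\<And>e. e \<in> F \<Longrightarrow> 0 < x e" and supp: "\<And>e. e \<notin> F \<Longrightarrow> d e = 0"
  obtains \<epsilon> where "0 < \<epsilon>" and "\<And>e. \<epsilon> * \<bar>d e\<bar> \<le> x e"
proof
  define m where "m = Min (insert 1 (x ` F))"
  define M where "M = 1 + (\<Sum>e\<in>F. \<bar>d e\<bar>)"
  have m: "0 < m" using assms by (simp add: m_def)
  have M: "1 \<le> M" by (simp add: M_def sum_nonneg)
  show "0 < m / M" using m M by simp
  show "m / M * \<bar>d e\<bar> \<le> x e" for e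
  proof (cases "e \<in> F")
    case True
    have "\<bar>d e\<bar> \<le> M"
      using member_le_sum[of e F "\<lambda>e. \<bar>d e\<bar>"] True assms(1) by (simp add: M_def)
    then have "m / M * \<bar>d e\<bar> \<le> m"
      using m M by (simp add: divide_le_eq mult.commute mult_left_mono)
    also have "m \<le> x e" using True assms(1) by (simp add: m_def)
    finally show ?thesis .
  qed (simp add: supp x_nonneg)
qed

lemma extreme_fractional_not_E1:
  assumes ext: "extreme_pt x (S_poly (V1 \<union> V2) E1 E2 R)" and e: "e \<in> fractional_edges"
  shows "e \<notin> E1"
proof
  assume "e \<in> E1"
  have e': "e \<in> E" "0 < x e" "x e < 1" using e by (auto simp: fractional_edges_def)
  obtain u w where uw: "e = {u, w}" "u \<in> V1" "w \<in> V2" using e'(1) by (rule edgeE)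
  have "tie u e = x e" using positive_edge_tight(3)[OF e'(1,2) uw \<open>e \<in> E1\<close>] .
  moreover have "e \<in> inc E u" using e'(1) uw by (simp add: inc_def)
  then have "tie u e = 1" using extreme_degenerate(2)[OF ext _ e'(2)] by simp
  ultimately show False using e'(3) by simp
qed

lemma extreme_circulation_in_S:
  assumes ext: "extreme_pt x (S_poly (V1 \<union> V2) E1 E2 R)"
    and supp: "\<And>e. e \<notin> fractional_edges \<Longrightarrow> d e = 0" and vertex: "\<And>v. sum d (inc E v) = 0"
    and small: "\<And>e. \<bar>d e\<bar> \<le> x e"
  shows "(\<lambda>e. x e + d e) \<in> S_poly (V1 \<union> V2) E1 E2 R"
proof (rule perturbation_in_S)
  have d0: "\<And>g. \<not> 0 < x g \<Longrightarrow> d g = 0" using supp by (auto simp: fractional_edges_def)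
  show "d e = 0" if "e \<notin> E" for e using supp that by (simp add: fractional_edges_def)
  show "d e = 0" if "e \<in> E1" for e using supp extreme_fractional_not_E1[OF ext] that by blast
  show "sum d (inc E v) = 0" for v by (rule vertex)
  show "sum d (better E R v e) = 0" if "e \<in> inc E v" for v e
    using sum_all_or_none[OF d0 vertex better_subset extreme_class_all_or_none[OF ext that]] by simp
  show "sum d (indiff E R v e) = 0" if "e \<in> inc E v" for v e
    using sum_all_or_none[OF d0 vertex indiff_subset extreme_class_all_or_none[OF ext that]] by simp
  show "0 \<le> x e + d e" for e
    using small[of e] abs_ge_minus_self[of "d e"] by linarith
qed

lemma extreme_integral:
  assumes ext: "extreme_pt x (S_poly (V1 \<union> V2) E1 E2 R)"
  shows "x e = 0 \<or> x e = 1"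
proof (rule ccontr)
  assume frac: "\<not> (x e = 0 \<or> x e = 1)"
  then have "e \<in> E" using x_outside by blast
  then obtain u w where "e = {u, w}" by (rule edgeE)
  then have "x e \<le> 1" using x_le_load[of e u] load_le_1[of u] \<open>e \<in> E\<close> by (simp add: inc_def)
  then have "e \<in> fractional_edges"
    using frac x_nonneg[of e] \<open>e \<in> E\<close> by (auto simp: fractional_edges_def)
  then have F: "fractional_edges \<subseteq> E" "fractional_edges \<noteq> {}"
    by (auto simp: fractional_edges_def)
  obtain d :: "'v set \<Rightarrow> real" where supp: "\<And>e. e \<notin> fractional_edges \<Longrightarrow> d e = 0"
    and vertex: "\<And>v. sum d (inc E v) = 0" and nonzero: "d \<noteq> (\<lambda>_. 0)"
    using min_degree_two_circulation[OF F fractional_edges_min_degree_two] by blast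
  have fin: "finite fractional_edges"
    using finite_edges by (simp add: fractional_edges_def)
  have pos: "\<And>e. e \<in> fractional_edges \<Longrightarrow> 0 < x e"
    by (simp add: fractional_edges_def)
  obtain \<epsilon> where \<epsilon>: "0 < \<epsilon>" "\<And>e. \<epsilon> * \<bar>d e\<bar> \<le> x e"
    using small_multiple_below_x[where d = d, OF fin pos supp] by blast
  have "(\<lambda>e. x e + t * d e) \<in> S_poly (V1 \<union> V2) E1 E2 R" if "\<bar>t\<bar> = \<epsilon>" for t
    using \<epsilon>(2) that supp vertex
    by (intro extreme_circulation_in_S[OF ext]) (simp_all add: abs_mult sum_distrib_left[symmetric])
  from this[of \<epsilon>] this[of "- \<epsilon>"] \<epsilon>(1)
  have "(\<lambda>e. \<epsilon> * d e) = (\<lambda>_. 0)"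
    by (intro extreme_pt_symmetric_perturbation[OF ext]) simp_all
  then show False using nonzero \<epsilon>(1) by (simp add: fun_eq_iff)
qed

section \<open>Integral points are stable matchings\<close>

definition support :: "'v set set" where
  "support = {e \<in> E. x e = 1}"

lemma integral_indicator_support: "(\<And>e. x e = 0 \<or> x e = 1) \<Longrightarrow> indicator support = x"
  using x_outside by (auto simp: support_def indicator_def fun_eq_iff)

lemma integral_support_matching:
  assumes int: "\<And>e. x e = 0 \<or> x e = 1"
  shows "matching E support" and "\<And>v f. f \<in> support \<Longrightarrow> v \<in> f \<Longrightarrow> mu_at support v = f"
proof -
  have sub: "support \<subseteq> E" by (auto simp: support_def)
  have fin: "finite (inc support v)" for v
    using finite_subset[OF _ finite_inc, of "inc support v" v] sub by (auto simp: inc_def)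
  have "load v = sum x (inc support v)" for v
    unfolding load_def using int sub
    by (intro sum.mono_neutral_right[OF finite_inc]) (auto simp: inc_def support_def)
  also have "sum x (inc support v) = real (card (inc support v))" for v
    by (simp add: inc_def support_def)
  finally have card: "card (inc support v) \<le> 1" for v using load_le_1[of v] by simp
  show "matching E support" unfolding matching_def using sub card by auto
  show "mu_at support v = f" if "f \<in> support" "v \<in> f" for v f
    using mu_at_eqI[OF card fin that] .
qed

lemma integral_mass_in_support:
  assumes int: "\<And>e. x e = 0 \<or> x e = 1" and "0 < sum x A" and "A \<subseteq> E"
  obtains f where "f \<in> A" "f \<in> support"
proof -
  have "\<exists>f\<in>A. x f \<noteq> 0"
  proof (rule ccontr)
    assume "\<not> ?thesis"
    then have "sum x A = 0" by simp
    then show False using assms(2) by simp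
  qed
  then show thesis using that int assms(3) by (auto simp: support_def)
qed

lemma integral_support_stable:
  assumes int: "\<And>e. x e = 0 \<or> x e = 1"
  shows "nonuniformly_stable E1 E2 R support"
proof -
  note at = integral_support_matching(2)[OF int]
  have above_pos: "\<not> weakly_blocks R support e" if v: "v \<in> e" and pos: "0 < above v e" for e v
  proof -
    obtain f where f: "f \<in> better E R v e" "f \<in> support"
      using integral_mass_in_support[OF int, of "better E R v e"] pos better_subset
      unfolding above_def inc_def by blast
    then have "v \<in> f" "\<not> R v e f" by (auto simp: better_def strict_def inc_def)
    then show ?thesis using at[OF f(2)] v by (auto simp: weakly_blocks_def)
  qed
  have E1_stable: "\<not> weakly_blocks R support e" if e: "e \<in> E1 - support" for e
  proof (rule ccontr)
    assume "\<not> \<not> weakly_blocks R support e"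
    then have "above v e \<le> 0" if "v \<in> e" for v using above_pos that by force
    then have "(\<Sum>v\<in>e. above v e) \<le> 0" by (rule sum_nonpos)
    moreover have "e \<in> E" using e E_split by blast
    then have "x e = 0" using int[of e] e by (auto simp: support_def)
    ultimately show False using E1_constraint[of e] e by auto
  qed
  have E2_stable: "\<not> strongly_blocks R support e" if e: "e \<in> E2 - support" for e
  proof (cases "\<exists>v\<in>e. 0 < above v e")
    case True
    then show ?thesis using above_pos by (auto simp: strongly_blocks_def)
  next
    case False
    then have "(\<Sum>v\<in>e. above v e) = 0"
      using above_nonneg by (intro sum.neutral) (metis order.not_eq_order_implies_strict)
    then have tie_pos: "0 < tie w e" if "w \<in> e" for w using E2_constraint[of e w] e that by auto
    have "R w (mu_at support w) e" if w: "w \<in> e" for w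
    proof -
      obtain f where f: "f \<in> indiff E R w e" "f \<in> support"
        using integral_mass_in_support[OF int, of "indiff E R w e"] tie_pos[OF w] indiff_subset
        unfolding tie_def inc_def by blast
      then have "w \<in> f" "R w f e" by (auto simp: indiff_def inc_def)
      then show ?thesis using at[OF f(2)] by simp
    qed
    then show ?thesis by (auto simp: strongly_blocks_def strict_def)
  qed
  show ?thesis
    unfolding nonuniformly_stable_def
    using integral_support_matching(1)[OF int] E_split E1_stable E2_stable by auto
qed

end

theorem lemma4p3:
  fixes V1 V2 :: "'v set" and E E1 E2 :: "'v set set"
    and R :: "'v \<Rightarrow> 'v set \<Rightarrow> 'v set \<Rightarrow> bool" and x :: "'v set \<Rightarrow> real"
  assumes "bip_graph V1 V2 E"
    and "E = E1 \<union> E2" and "E1 \<inter> E2 = {}"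
    and "pref_ok (V1 \<union> V2) E R"
    and "extreme_pt x (S_poly (V1 \<union> V2) E1 E2 R)"
  shows "\<exists>\<mu>. matching E \<mu> \<and> nonuniformly_stable E1 E2 R \<mu> \<and> indicator \<mu> = x"
proof -
  interpret S_point V1 V2 E E1 E2 R x
    using assms by unfold_locales (simp_all add: extreme_pt_def)
  have int: "\<And>e. x e = 0 \<or> x e = 1" using extreme_integral[OF assms(5)] .
  show ?thesis
    using integral_support_matching(1)[OF int] integral_support_stable[OF int]
      integral_indicator_support[OF int] by blast
qed

end
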